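(* Let $E$ be a Banach lattice with an order continuous norm, let $\mathfrak{B}$ be a Boolean subalgebra of $\mathfrak{B}(E)$, and let $T\colon E\to E$ be a $\mathfrak{B}$-Volterra operator with $T\le I_E$. Then the operator $\pi-\pi T+\pi^*T$ is $\mathfrak{B}$-Volterra for every $\pi\in\mathfrak{B}$. Further, if $\pi\in\mathfrak{B}$ satisfies $\pi T=\pi$, then the operator $I_E+\pi-T$ is $\mathfrak{B}$-Volterra.
   Context: $\mathfrak{B}(E)$ is the Boolean algebra of all order projections on $E$ ($\pi\le\rho$ iff $\pi\rho=\pi$, $\pi\wedge\rho=\pi\rho$, $\pi^*=I_E-\pi$, zero $\mathbf 0$, unit $\mathbf 1=I_E$). A positive operator $T\colon E\to E$ is $\mathfrak{B}$-Volterra if for all $\pi\in\mathfrak{B}$ and $x,y\in E$, $\pi x=\pi y$ implies $\pi Tx=\pi Ty$. $T\le I_E$ refers to the usual order on operators ($I_E-T$ positive). *)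

theory Defs
  imports "HOL-Analysis.Analysis"
begin

class banach_lattice = banach + ordered_real_vector + lattice +
  assumes lattice_norm: "sup x (- x) \<le> sup y (- y) \<Longrightarrow> norm x \<le> norm y"

definition order_continuous_norm :: "('a::banach_lattice) itself \<Rightarrow> bool" where
  "order_continuous_norm _ \<longleftrightarrow>
     (\<forall>D::'a set. D \<noteq> {}
        \<and> (\<forall>x\<in>D. \<forall>y\<in>D. \<exists>z\<in>D. z \<le> x \<and> z \<le> y)
        \<and> (\<forall>x\<in>D. 0 \<le> x)
        \<and> (\<forall>l. (\<forall>x\<in>D. l \<le> x) \<longrightarrow> l \<le> 0)
        \<longrightarrow> (\<forall>e>0. \<exists>x\<in>D. norm x < e))"

definition positive_op :: "('a::banach_lattice \<Rightarrow> 'a) \<Rightarrow> bool" where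
  "positive_op T \<longleftrightarrow> linear T \<and> (\<forall>x. 0 \<le> x \<longrightarrow> 0 \<le> T x)"

definition order_projection :: "('a::banach_lattice \<Rightarrow> 'a) \<Rightarrow> bool" where
  "order_projection P \<longleftrightarrow> linear P \<and> P \<circ> P = P \<and>
     (\<forall>x. 0 \<le> x \<longrightarrow> 0 \<le> P x \<and> P x \<le> x)"

text \<open>Boolean subalgebra of the Boolean algebra of all order projections:
  contains 0 and I, closed under meet (composition) and complement (I - P).\<close>

definition boolean_subalgebra :: "('a::banach_lattice \<Rightarrow> 'a) set \<Rightarrow> bool" where
  "boolean_subalgebra B \<longleftrightarrow>
     B \<subseteq> {P. order_projection P} \<and> (\<lambda>x. 0) \<in> B \<and> id \<in> B \<and>
     (\<forall>P\<in>B. \<forall>Q\<in>B. P \<circ> Q \<in> B) \<and>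
     (\<forall>P\<in>B. (\<lambda>x. x - P x) \<in> B)"

definition volterra :: "('a::banach_lattice \<Rightarrow> 'a) set \<Rightarrow> ('a \<Rightarrow> 'a) \<Rightarrow> bool" where
  "volterra B T \<longleftrightarrow> positive_op T \<and>
     (\<forall>\<pi>\<in>B. \<forall>x y. \<pi> x = \<pi> y \<longrightarrow> \<pi> (T x) = \<pi> (T y))"

end

theory Submission
  imports Defs
begin

text \<open>For linear \<open>T\<close> and \<open>\<rho>\<close>, the condition \<open>\<rho> x = \<rho> y \<Longrightarrow> \<rho> T x = \<rho> T y\<close> just says that
  \<open>T\<close> maps \<open>ker \<rho>\<close> into itself. The linear operators doing so for every \<open>\<rho> \<in> \<B>\<close> form an
  algebra which contains \<open>I\<^sub>E\<close> and \<open>T\<close>, and also every \<open>\<pi> \<in> \<B>\<close>, because the projections of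
  a Boolean algebra commute. Both operators of the theorem are built from \<open>I\<^sub>E\<close>, \<open>\<pi>\<close> and \<open>T\<close>
  by sums, differences and products, so they are \<open>\<B>\<close>-Volterra as soon as they are positive,
  which follows from \<open>0 \<le> T \<le> I\<^sub>E\<close> and \<open>0 \<le> \<pi> \<le> I\<^sub>E\<close>.\<close>

lemma order_projectionD:
  assumes "order_projection P"
  shows "linear P" "P (P x) = P x" "0 \<le> x \<Longrightarrow> 0 \<le> P x" "0 \<le> x \<Longrightarrow> P x \<le> x"
  using assms unfolding order_projection_def by (auto simp: fun_eq_iff)

text \<open>\<open>Q P Q\<close> equals \<open>P Q\<close> by idempotence of \<open>(I - P) Q\<close>, and equals \<open>Q P\<close> by
  idempotence of \<open>Q (I - P)\<close>.\<close>

lemma linear_idempotents_commute: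
  fixes P Q :: "'a::real_vector \<Rightarrow> 'a"
  assumes "linear P" "linear Q"
    and Q_idem: "\<And>y. Q (Q y) = Q y"
    and PQ_idem: "\<And>y. P (Q (P (Q y))) = P (Q y)"
    and QP_idem: "\<And>y. Q (P (Q (P y))) = Q (P y)"
    and compl_Q_idem: "\<And>y. (\<lambda>z. z - P z) (Q ((\<lambda>z. z - P z) (Q y))) = (\<lambda>z. z - P z) (Q y)"
    and Q_compl_idem: "\<And>y. Q ((\<lambda>z. z - P z) (Q ((\<lambda>z. z - P z) y))) = Q ((\<lambda>z. z - P z) y)"
  shows "P (Q x) = Q (P x)"
proof -
  note diff = linear_diff[OF \<open>linear P\<close>] linear_diff[OF \<open>linear Q\<close>]
  have "Q x - P (Q x) = Q x - Q (P (Q x))"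
    using compl_Q_idem[of x] by (simp add: diff Q_idem PQ_idem)
  moreover have "Q x - Q (P x) = Q x - Q (P (Q x))"
    using Q_compl_idem[of x] by (simp add: diff Q_idem QP_idem)
  ultimately show ?thesis
    by simp
qed

lemma boolean_subalgebra_order_projection:
  "boolean_subalgebra B \<Longrightarrow> P \<in> B \<Longrightarrow> order_projection P"
  unfolding boolean_subalgebra_def by blast

lemma boolean_subalgebra_linear: "boolean_subalgebra B \<Longrightarrow> P \<in> B \<Longrightarrow> linear P"
  using boolean_subalgebra_order_projection order_projectionD(1) by blast

lemma boolean_subalgebra_commute:
  assumes B: "boolean_subalgebra B" and "P \<in> B" "Q \<in> B"
  shows "P (Q x) = Q (P x)"
proof (rule linear_idempotents_commute)
  have closed: "P \<circ> Q \<in> B" "Q \<circ> P \<in> B" "(\<lambda>z. z - P z) \<circ> Q \<in> B" "Q \<circ> (\<lambda>z. z - P z) \<in> B"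
    using B \<open>P \<in> B\<close> \<open>Q \<in> B\<close> unfolding boolean_subalgebra_def by blast+
  note proj = boolean_subalgebra_order_projection[OF B]
  show "linear P" "linear Q" "\<And>y. Q (Q y) = Q y"
    using order_projectionD(1,2)[OF proj] \<open>P \<in> B\<close> \<open>Q \<in> B\<close> by blast+
  show "\<And>y. P (Q (P (Q y))) = P (Q y)" "\<And>y. Q (P (Q (P y))) = Q (P y)"
    "\<And>y. (\<lambda>z. z - P z) (Q ((\<lambda>z. z - P z) (Q y))) = (\<lambda>z. z - P z) (Q y)"
    "\<And>y. Q ((\<lambda>z. z - P z) (Q ((\<lambda>z. z - P z) y))) = Q ((\<lambda>z. z - P z) y)"
    using order_projectionD(2)[OF proj[OF closed(1)]] order_projectionD(2)[OF proj[OF closed(2)]]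
      order_projectionD(2)[OF proj[OF closed(3)]] order_projectionD(2)[OF proj[OF closed(4)]]
    by simp_all
qed

definition preserves_kernels :: "('a::banach_lattice \<Rightarrow> 'a) set \<Rightarrow> ('a \<Rightarrow> 'a) \<Rightarrow> bool" where
  "preserves_kernels B T \<longleftrightarrow> linear T \<and> (\<forall>\<rho>\<in>B. \<forall>z. \<rho> z = 0 \<longrightarrow> \<rho> (T z) = 0)"

lemma linear_respects_kernel_iff:
  fixes \<rho> T :: "'a::real_vector \<Rightarrow> 'a"
  assumes "linear \<rho>" "linear T"
  shows "(\<forall>x y. \<rho> x = \<rho> y \<longrightarrow> \<rho> (T x) = \<rho> (T y)) \<longleftrightarrow> (\<forall>z. \<rho> z = 0 \<longrightarrow> \<rho> (T z) = 0)"
proof (intro iffI allI impI)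
  fix z assume respects: "\<forall>x y. \<rho> x = \<rho> y \<longrightarrow> \<rho> (T x) = \<rho> (T y)" and "\<rho> z = 0"
  then have "\<rho> z = \<rho> 0"
    using linear_0[OF \<open>linear \<rho>\<close>] by simp
  then have "\<rho> (T z) = \<rho> (T 0)"
    using respects by blast
  then show "\<rho> (T z) = 0"
    using linear_0[OF \<open>linear \<rho>\<close>] linear_0[OF \<open>linear T\<close>] by simp
next
  fix x y assume preserves: "\<forall>z. \<rho> z = 0 \<longrightarrow> \<rho> (T z) = 0" and "\<rho> x = \<rho> y"
  then have "\<rho> (x - y) = 0"
    by (simp add: linear_diff[OF \<open>linear \<rho>\<close>])
  then have "\<rho> (T (x - y)) = 0"
    using preserves by blast
  then show "\<rho> (T x) = \<rho> (T y)"
    by (simp add: linear_diff[OF \<open>linear \<rho>\<close>] linear_diff[OF \<open>linear T\<close>])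
qed

lemma volterra_iff_positive_preserves_kernels:
  assumes "boolean_subalgebra B"
  shows "volterra B T \<longleftrightarrow> positive_op T \<and> preserves_kernels B T"
proof (cases "linear T")
  case True
  then have "(\<forall>x y. \<rho> x = \<rho> y \<longrightarrow> \<rho> (T x) = \<rho> (T y)) \<longleftrightarrow> (\<forall>z. \<rho> z = 0 \<longrightarrow> \<rho> (T z) = 0)"
    if "\<rho> \<in> B" for \<rho>
    using linear_respects_kernel_iff boolean_subalgebra_linear[OF assms that] by blast
  then show ?thesis
    unfolding volterra_def preserves_kernels_def positive_op_def using True by auto
next
  case False
  then show ?thesis
    unfolding volterra_def preserves_kernels_def positive_op_def by simp
qed

lemma preserves_kernels_linear: "preserves_kernels B T \<Longrightarrow> linear T"
  unfolding preserves_kernels_def by blast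

lemma volterraI:
  assumes "boolean_subalgebra B" "preserves_kernels B T" "\<And>x. 0 \<le> x \<Longrightarrow> 0 \<le> T x"
  shows "volterra B T"
  using assms unfolding volterra_iff_positive_preserves_kernels[OF assms(1)] positive_op_def
  by (simp add: preserves_kernels_linear)

lemma preserves_kernels_id: "preserves_kernels B (\<lambda>x. x)"
  unfolding preserves_kernels_def by (simp add: linear_ident)

lemma preserves_kernels_projection:
  assumes "boolean_subalgebra B" "\<pi> \<in> B"
  shows "preserves_kernels B \<pi>"
  unfolding preserves_kernels_def
proof (intro conjI ballI allI impI)
  show "linear \<pi>"
    using assms by (rule boolean_subalgebra_linear)
  fix \<rho> z assume "\<rho> \<in> B" "\<rho> z = 0"
  then show "\<rho> (\<pi> z) = 0"
    using boolean_subalgebra_commute[OF assms(1) \<open>\<rho> \<in> B\<close> \<open>\<pi> \<in> B\<close>] linear_0[OF \<open>linear \<pi>\<close>] by simp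
qed

lemma preserves_kernels_comp:
  "preserves_kernels B S \<Longrightarrow> preserves_kernels B U \<Longrightarrow> preserves_kernels B (\<lambda>x. S (U x))"
  unfolding preserves_kernels_def using linear_compose[of U S] by (simp add: o_def)

lemma preserves_kernels_add:
  assumes "boolean_subalgebra B" "preserves_kernels B S" "preserves_kernels B U"
  shows "preserves_kernels B (\<lambda>x. S x + U x)"
  unfolding preserves_kernels_def
proof (intro conjI ballI allI impI)
  show "linear (\<lambda>x. S x + U x)"
    using assms(2,3) unfolding preserves_kernels_def by (simp add: linear_compose_add)
  fix \<rho> z assume "\<rho> \<in> B" "\<rho> z = 0"
  then have "\<rho> (S z) = 0" "\<rho> (U z) = 0"
    using assms(2,3) unfolding preserves_kernels_def by blast+
  then show "\<rho> (S z + U z) = 0"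
    using linear_add[OF boolean_subalgebra_linear[OF assms(1) \<open>\<rho> \<in> B\<close>]] by simp
qed

lemma preserves_kernels_diff:
  assumes "boolean_subalgebra B" "preserves_kernels B S" "preserves_kernels B U"
  shows "preserves_kernels B (\<lambda>x. S x - U x)"
  unfolding preserves_kernels_def
proof (intro conjI ballI allI impI)
  show "linear (\<lambda>x. S x - U x)"
    using assms(2,3) unfolding preserves_kernels_def by (simp add: linear_compose_sub)
  fix \<rho> z assume "\<rho> \<in> B" "\<rho> z = 0"
  then have "\<rho> (S z) = 0" "\<rho> (U z) = 0"
    using assms(2,3) unfolding preserves_kernels_def by blast+
  then show "\<rho> (S z - U z) = 0"
    using linear_diff[OF boolean_subalgebra_linear[OF assms(1) \<open>\<rho> \<in> B\<close>]] by simp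
qed

theorem theorem3p11:
  fixes B :: "('a::banach_lattice \<Rightarrow> 'a) set" and T :: "'a \<Rightarrow> 'a"
  assumes "order_continuous_norm TYPE('a)"
    and "boolean_subalgebra B"
    and "volterra B T"
    and "\<forall>x. 0 \<le> x \<longrightarrow> T x \<le> x"
  shows "(\<forall>\<pi>\<in>B. volterra B (\<lambda>x. \<pi> x - \<pi> (T x) + (T x - \<pi> (T x))))
       \<and> (\<forall>\<pi>\<in>B. (\<forall>x. \<pi> (T x) = \<pi> x) \<longrightarrow> volterra B (\<lambda>x. x + \<pi> x - T x))"
proof (intro conjI ballI impI)
  note B = \<open>boolean_subalgebra B\<close>
  have T: "positive_op T" "preserves_kernels B T"
    using assms(3) volterra_iff_positive_preserves_kernels[OF B] by auto
  fix \<pi> assume "\<pi> \<in> B"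
  note \<pi>_preserves = preserves_kernels_projection[OF B \<open>\<pi> \<in> B\<close>]
  have \<pi>: "linear \<pi>" "0 \<le> x \<Longrightarrow> 0 \<le> \<pi> x" "0 \<le> x \<Longrightarrow> \<pi> x \<le> x" for x
    using order_projectionD[OF boolean_subalgebra_order_projection[OF B \<open>\<pi> \<in> B\<close>]] by auto
  have T_le_id: "0 \<le> x - T x" if "0 \<le> x" for x
    using assms(4) that by simp
  have T_nonneg: "0 \<le> T x" if "0 \<le> x" for x
    using T(1) that unfolding positive_op_def by blast
  show "volterra B (\<lambda>x. \<pi> x - \<pi> (T x) + (T x - \<pi> (T x)))"
  proof (rule volterraI[OF B])
    have "preserves_kernels B (\<lambda>x. \<pi> (T x))"
      using preserves_kernels_comp \<pi>_preserves T(2) .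
    then show "preserves_kernels B (\<lambda>x. \<pi> x - \<pi> (T x) + (T x - \<pi> (T x)))"
      by (intro preserves_kernels_add preserves_kernels_diff B \<pi>_preserves T(2))
    fix x :: 'a assume "0 \<le> x"
    have "0 \<le> \<pi> (x - T x) + (T x - \<pi> (T x))"
      using \<pi>(2)[OF T_le_id[OF \<open>0 \<le> x\<close>]] \<pi>(3)[OF T_nonneg[OF \<open>0 \<le> x\<close>]] by simp
    then show "0 \<le> \<pi> x - \<pi> (T x) + (T x - \<pi> (T x))"
      by (simp add: linear_diff[OF \<pi>(1)])
  qed
  show "volterra B (\<lambda>x. x + \<pi> x - T x)"
  proof (rule volterraI[OF B])
    show "preserves_kernels B (\<lambda>x. x + \<pi> x - T x)"
      by (intro preserves_kernels_add preserves_kernels_diff B \<pi>_preserves T(2) preserves_kernels_id)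
    fix x :: 'a assume "0 \<le> x"
    then show "0 \<le> x + \<pi> x - T x"
      using add_nonneg_nonneg[OF T_le_id \<pi>(2)] by (simp add: algebra_simps)
  qed
qed

end
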